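(* A finite-dimensional complex Lie algebra admits a periodic derivation if and only if it admits a periodic derivation of order six.
   Context: A derivation $D$ of a Lie algebra is called periodic if there is an integer $m\ge 1$ with $D^m=\mathrm{id}$; its order is the smallest such $m$. *)

theory Defs
  imports Main "HOL-Analysis.Analysis"
begin

definition lie_algebra ::
  "(complex \<Rightarrow> 'a::ab_group_add \<Rightarrow> 'a) \<Rightarrow> ('a \<Rightarrow> 'a \<Rightarrow> 'a) \<Rightarrow> bool" where
  "lie_algebra smul br \<longleftrightarrow>
     vector_space smul \<and>
     (\<forall>x y z. br (x + y) z = br x z + br y z) \<and>
     (\<forall>x y z. br x (y + z) = br x y + br x z) \<and>
     (\<forall>c x y. br (smul c x) y = smul c (br x y)) \<and>
     (\<forall>c x y. br x (smul c y) = smul c (br x y)) \<and>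
     (\<forall>x. br x x = 0) \<and>
     (\<forall>x y z. br x (br y z) + br y (br z x) + br z (br x y) = 0)"

definition finite_dim :: "(complex \<Rightarrow> 'a::ab_group_add \<Rightarrow> 'a) \<Rightarrow> bool" where
  "finite_dim smul \<longleftrightarrow> (\<exists>B. finite B \<and> module.span smul B = UNIV)"

definition lie_derivation ::
  "(complex \<Rightarrow> 'a::ab_group_add \<Rightarrow> 'a) \<Rightarrow> ('a \<Rightarrow> 'a \<Rightarrow> 'a) \<Rightarrow> ('a \<Rightarrow> 'a) \<Rightarrow> bool" where
  "lie_derivation smul br D \<longleftrightarrow>
     Vector_Spaces.linear smul smul D \<and>
     (\<forall>x y. D (br x y) = br (D x) y + br x (D y))"

definition periodic :: "('a \<Rightarrow> 'a) \<Rightarrow> bool" where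
  "periodic D \<longleftrightarrow> (\<exists>m::nat. m \<ge> 1 \<and> D ^^ m = id)"

definition periodic_of_order :: "('a \<Rightarrow> 'a) \<Rightarrow> nat \<Rightarrow> bool" where
  "periodic_of_order D m \<longleftrightarrow> m \<ge> 1 \<and> D ^^ m = id \<and> (\<forall>k. 1 \<le> k \<and> k < m \<longrightarrow> D ^^ k \<noteq> id)"

end

theory Submission
  imports Defs
begin

text \<open>
  A periodic derivation \<open>D\<close> with \<open>D ^^ m = id\<close> is diagonalisable: the discrete Fourier
  averages of the powers of \<open>D\<close> project onto its eigenspaces, whose eigenvalues are \<open>m\<close>-th
  roots of unity, and the bracket of eigenvectors for \<open>l\<close> and \<open>k\<close> is an eigenvector for \<open>l + k\<close>.
  Hence replacing every eigenvalue \<open>l\<close> by \<open>g l\<close> gives again a derivation as soon as \<open>g\<close> is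
  additive on all triples \<open>l, k, l + k\<close> of roots of unity. For such a triple \<open>k / l\<close> is a
  primitive cube root of unity, so any map that commutes with multiplication by sixth roots of
  unity is additive on it. Dividing \<open>l\<close> by a sixth root of \<open>l ^ 6\<close> chosen as a function of
  \<open>l ^ 6\<close> alone is such a map, with values in the sixth roots of unity; rescaled so that one
  actual eigenvalue goes to a primitive sixth root of unity, it yields a derivation of order
  exactly six.
\<close>

lemma unit_sum_cube_root:
  fixes t :: complex
  assumes "norm t = 1" and "norm (1 + t) = 1"
  shows "t\<^sup>2 + t + 1 = 0"
proof -
  have "(Re t)\<^sup>2 + (Im t)\<^sup>2 = 1" and "(1 + Re t)\<^sup>2 + (Im t)\<^sup>2 = 1"
    using assms by (simp_all add: cmod_def)
  then have "Re t = -1/2"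
    by (simp add: power2_eq_square algebra_simps)
  moreover from this have "(Im t)\<^sup>2 = 3/4"
    using \<open>(Re t)\<^sup>2 + (Im t)\<^sup>2 = 1\<close> by (simp add: power2_eq_square)
  ultimately show ?thesis
    by (simp add: complex_eq_iff power2_eq_square algebra_simps)
qed

text \<open>\<open>exp (Ln (x ^ 6) / 6)\<close> is a sixth root of \<open>x ^ 6\<close> that depends on \<open>x\<close> only through
  \<open>x ^ 6\<close>, so \<open>sixth_phase\<close> commutes with multiplication by sixth roots of unity.\<close>

definition sixth_phase :: "complex \<Rightarrow> complex" where
  "sixth_phase x = x / exp (Ln (x ^ 6) / 6)"

lemma sixth_phase_nonzero: "x \<noteq> 0 \<Longrightarrow> sixth_phase x \<noteq> 0"
  by (simp add: sixth_phase_def)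

lemma sixth_phase_pow_6: "x \<noteq> 0 \<Longrightarrow> sixth_phase x ^ 6 = 1"
  by (simp add: sixth_phase_def power_divide exp_of_nat_mult[symmetric])

lemma sixth_phase_mult_root: "u ^ 6 = 1 \<Longrightarrow> sixth_phase (u * x) = u * sixth_phase x"
  by (simp add: sixth_phase_def power_mult_distrib)

lemma sixth_phase_add:
  fixes l k :: complex
  assumes "norm l = 1" and "norm k = 1" and "norm (l + k) = 1"
  shows "sixth_phase (l + k) = sixth_phase l + sixth_phase k"
proof -
  txt \<open>\<open>t\<close> is a primitive cube root of unity, and then \<open>1 + t = - t\<^sup>2\<close> is a sixth root of unity.\<close>
  define t where "t = k / l"
  have "l \<noteq> 0" using assms(1) by auto
  then have k: "k = t * l" and lk: "l + k = (1 + t) * l"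
    by (simp_all add: t_def algebra_simps)
  have "t\<^sup>2 + t + 1 = 0"
    using assms by (intro unit_sum_cube_root) (simp_all add: t_def norm_divide lk norm_mult)
  moreover have "t ^ 3 - 1 = (t - 1) * (t\<^sup>2 + t + 1)"
    by (simp add: power3_eq_cube power2_eq_square algebra_simps)
  ultimately have t3: "t ^ 3 = 1" and neg: "1 + t = - t\<^sup>2"
    by (simp_all add: algebra_simps eq_neg_iff_add_eq_0)
  from neg have "(1 + t) ^ 6 = (t ^ 3) ^ 4" by (simp flip: power_mult)
  moreover have "t ^ 6 = (t ^ 3)\<^sup>2" by (simp flip: power_mult)
  ultimately have "t ^ 6 = 1" and "(1 + t) ^ 6 = 1" using t3 by simp_all
  then have "sixth_phase (l + k) = (1 + t) * sixth_phase l"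
    and "sixth_phase k = t * sixth_phase l"
    by (simp only: lk sixth_phase_mult_root, simp only: k sixth_phase_mult_root)
  then show ?thesis
    by (simp add: algebra_simps)
qed

lemma primitive_root_unity_pow_eq_1:
  assumes "1 \<le> n"
  shows "exp (2 * of_real pi * \<i> / of_nat n) ^ j = 1 \<longleftrightarrow> n dvd j"
  using complex_root_unity_eq_1[OF assms, of j]
  by (simp add: exp_of_nat_mult[symmetric] mult_ac)

locale periodic_endomorphism = vector_space smul
  for smul :: "complex \<Rightarrow> 'a::ab_group_add \<Rightarrow> 'a" +
  fixes D :: "'a \<Rightarrow> 'a" and m :: nat
  assumes linear_D: "Vector_Spaces.linear smul smul D"
    and period_pos: "1 \<le> m"
    and funpow_period: "D ^^ m = id"
begin

sublocale vector_space_pair smul smul ..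

lemma linear_funpow:
  "Vector_Spaces.linear smul smul f \<Longrightarrow> Vector_Spaces.linear smul smul (f ^^ n)"
  by (induction n) (auto intro: linear_id Vector_Spaces.linear_compose)

definition root :: complex where
  "root = exp (2 * of_real pi * \<i> / of_nat m)"

lemma root_pow_eq_1_iff: "root ^ j = 1 \<longleftrightarrow> m dvd j"
  unfolding root_def by (rule primitive_root_unity_pow_eq_1[OF period_pos])

lemma root_nonzero: "root \<noteq> 0"
  by (simp add: root_def)

lemma root_pow_period: "(root ^ j) ^ m = 1"
  by (simp add: root_pow_eq_1_iff flip: power_mult)

lemma eigenvalue_pow_period:
  assumes "D w = smul l w" and "w \<noteq> 0"
  shows "l ^ m = 1"
proof -
  have "(D ^^ n) w = smul (l ^ n) w" for n
    using assms(1) by (induction n) (simp_all add: linear_scale[OF linear_D] mult.commute)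
  from this[of m] have "smul (l ^ m - 1) w = 0"
    by (simp add: funpow_period scale_left_diff_distrib)
  with assms(2) show ?thesis by simp
qed

lemma sum_inverse_root_powers:
  assumes "i < m"
  shows "(\<Sum>j<m. inverse (root ^ j) ^ i) = (if i = 0 then of_nat m else 0)"
proof -
  have "(\<Sum>j<m. inverse (root ^ j) ^ i) = (\<Sum>j<m. inverse (root ^ i) ^ j)"
    by (simp add: power_inverse mult.commute flip: power_mult)
  also have "\<dots> = (if inverse (root ^ i) = 1 then of_nat m else 0)"
    using sum_gp_strict[of "inverse (root ^ i)" m] root_pow_period[of i]
    by (auto simp: power_inverse)
  also have "\<dots> = (if i = 0 then of_nat m else 0)"
    using assms by (auto simp: root_pow_eq_1_iff dest: dvd_imp_le)
  finally show ?thesis .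
qed

definition eigenproj :: "nat \<Rightarrow> 'a \<Rightarrow> 'a" where
  "eigenproj j x = smul (1 / of_nat m) (\<Sum>i<m. smul (inverse (root ^ j) ^ i) ((D ^^ i) x))"

lemma linear_eigenproj: "Vector_Spaces.linear smul smul (eigenproj j)"
  unfolding eigenproj_def[abs_def]
  by (intro linear_compose_scale_right linear_compose_sum ballI linear_funpow linear_D)

lemma sum_eigenproj: "(\<Sum>j<m. eigenproj j x) = x"
proof -
  have "(\<Sum>j<m. eigenproj j x)
      = smul (1 / of_nat m) (\<Sum>i<m. smul (\<Sum>j<m. inverse (root ^ j) ^ i) ((D ^^ i) x))"
    unfolding eigenproj_def scale_sum_right[symmetric] scale_sum_left
    by (subst sum.swap) simp
  also have "\<dots> = smul (1 / of_nat m) (\<Sum>i<m. if i = 0 then smul (of_nat m) x else 0)"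
    by (intro arg_cong[where f = "smul _"] sum.cong) (simp_all add: sum_inverse_root_powers)
  also have "\<dots> = x"
    using period_pos by simp
  finally show ?thesis .
qed

lemma eigenproj_eigenvector: "D (eigenproj j x) = smul (root ^ j) (eigenproj j x)"
proof -
  define a where "a = inverse (root ^ j)"
  define f where "f i = smul (a ^ i) ((D ^^ i) x)" for i
  have "a ^ m = 1"
    by (simp add: a_def power_inverse root_pow_period)
  then have "f m = f 0"
    by (simp add: f_def funpow_period)
  then have "(\<Sum>i<m. f (Suc i)) = (\<Sum>i<m. f i)"
    using sum.lessThan_Suc_shift[of f m] sum.lessThan_Suc[of f m] by (simp add: add.commute)
  then have shifted: "smul a (\<Sum>i<m. smul (a ^ i) ((D ^^ Suc i) x)) = (\<Sum>i<m. f i)"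
    by (simp add: f_def scale_sum_right mult.commute)
  have "root ^ j * a = 1"
    using root_nonzero by (simp add: a_def)
  then have "(\<Sum>i<m. smul (a ^ i) ((D ^^ Suc i) x)) = smul (root ^ j) (\<Sum>i<m. f i)"
    by (simp flip: shifted)
  then show ?thesis
    by (simp add: eigenproj_def f_def a_def linear_scale[OF linear_D] linear_sum[OF linear_D])
qed

lemma eigenproj_commute: "eigenproj j (D x) = D (eigenproj j x)"
  by (simp add: eigenproj_def linear_scale[OF linear_D] linear_sum[OF linear_D] funpow_swap1)

lemma eigenproj_nonzero_imp_eigenvalue:
  assumes "D w = smul l w" and "eigenproj j w \<noteq> 0"
  shows "l = root ^ j"
proof -
  have "smul l (eigenproj j w) = smul (root ^ j) (eigenproj j w)"
    using eigenproj_commute[of j w] eigenproj_eigenvector[of j w]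
    by (simp add: assms(1) linear_scale[OF linear_eigenproj])
  with assms(2) show ?thesis by simp
qed

definition spectral_map :: "(complex \<Rightarrow> complex) \<Rightarrow> 'a \<Rightarrow> 'a" where
  "spectral_map g x = (\<Sum>j<m. smul (g (root ^ j)) (eigenproj j x))"

lemma linear_spectral_map: "Vector_Spaces.linear smul smul (spectral_map g)"
  unfolding spectral_map_def[abs_def]
  by (intro linear_compose_sum ballI linear_compose_scale_right linear_eigenproj)

lemma spectral_map_eigenvector:
  assumes "D w = smul l w"
  shows "spectral_map g w = smul (g l) w"
proof -
  have "smul (g (root ^ j)) (eigenproj j w) = smul (g l) (eigenproj j w)" for j
    using eigenproj_nonzero_imp_eigenvalue[OF assms, of j] by (cases "eigenproj j w = 0") auto
  then have "spectral_map g w = smul (g l) (\<Sum>j<m. eigenproj j w)"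
    unfolding spectral_map_def scale_sum_right by (intro sum.cong refl)
  then show ?thesis
    by (simp add: sum_eigenproj)
qed

lemma funpow_spectral_map_eigenvector:
  assumes "D w = smul l w"
  shows "(spectral_map g ^^ n) w = smul (g l ^ n) w"
  by (induction n) (simp_all add: spectral_map_eigenvector[OF assms] mult.commute
      linear_scale[OF linear_spectral_map])

lemma funpow_spectral_map_eq_id:
  assumes "\<And>l. l ^ m = 1 \<Longrightarrow> g l ^ n = 1"
  shows "spectral_map g ^^ n = id"
proof
  fix x
  have "(spectral_map g ^^ n) x = (\<Sum>j<m. (spectral_map g ^^ n) (eigenproj j x))"
    by (subst sum_eigenproj[symmetric, of x])
      (simp add: linear_sum[OF linear_funpow[OF linear_spectral_map]])
  also have "\<dots> = (\<Sum>j<m. eigenproj j x)"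
    by (simp add: funpow_spectral_map_eigenvector[OF eigenproj_eigenvector] assms root_pow_period)
  finally show "(spectral_map g ^^ n) x = id x"
    by (simp add: sum_eigenproj)
qed

end

locale periodic_derivation = periodic_endomorphism smul D m
  for smul :: "complex \<Rightarrow> 'a::ab_group_add \<Rightarrow> 'a" and D m +
  fixes br :: "'a \<Rightarrow> 'a \<Rightarrow> 'a"
  assumes lie: "lie_algebra smul br"
    and derivation_D: "lie_derivation smul br D"
begin

lemma linear_bracket_left: "Vector_Spaces.linear smul smul (\<lambda>x. br x y)"
  and linear_bracket_right: "Vector_Spaces.linear smul smul (br x)"
  using lie by (simp_all add: lie_algebra_def Vector_Spaces.linear_iff)

lemma bracket_sum_sum: "br (\<Sum>a\<in>A. f a) (\<Sum>b\<in>B. h b) = (\<Sum>a\<in>A. \<Sum>b\<in>B. br (f a) (h b))"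
  by (simp only: linear_sum[OF linear_bracket_left]) (simp only: linear_sum[OF linear_bracket_right])

lemma bracket_eigenvectors:
  assumes "D u = smul l u" and "D v = smul k v"
  shows "D (br u v) = smul (l + k) (br u v)"
  using derivation_D assms
  by (simp add: lie_derivation_def scale_left_distrib linear_scale[OF linear_bracket_left]
      linear_scale[OF linear_bracket_right])

lemma spectral_map_bracket_eigenvectors:
  assumes add: "\<And>l k. l ^ m = 1 \<Longrightarrow> k ^ m = 1 \<Longrightarrow> (l + k) ^ m = 1 \<Longrightarrow> g (l + k) = g l + g k"
    and u: "D u = smul l u" and v: "D v = smul k v" and "l ^ m = 1" and "k ^ m = 1"
  shows "spectral_map g (br u v) = br (spectral_map g u) v + br u (spectral_map g v)"
proof -
  have uv: "D (br u v) = smul (l + k) (br u v)"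
    by (rule bracket_eigenvectors[OF u v])
  have "br (spectral_map g u) v + br u (spectral_map g v) = smul (g l + g k) (br u v)"
    by (simp add: spectral_map_eigenvector[OF u] spectral_map_eigenvector[OF v]
        scale_left_distrib linear_scale[OF linear_bracket_left] linear_scale[OF linear_bracket_right])
  moreover have "g (l + k) = g l + g k" if "br u v \<noteq> 0"
    using add assms(4,5) eigenvalue_pow_period[OF uv that] by blast
  ultimately show ?thesis
    by (cases "br u v = 0")
      (simp_all add: spectral_map_eigenvector[OF uv] linear_0[OF linear_spectral_map])
qed

lemma spectral_map_derivation:
  assumes add: "\<And>l k. l ^ m = 1 \<Longrightarrow> k ^ m = 1 \<Longrightarrow> (l + k) ^ m = 1 \<Longrightarrow> g (l + k) = g l + g k"
  shows "lie_derivation smul br (spectral_map g)"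
  unfolding lie_derivation_def
proof (intro conjI allI linear_spectral_map)
  fix x y
  let ?T = "spectral_map g" and ?P = "\<lambda>v j. eigenproj j v"
  have "?T (br x y) = ?T (br (\<Sum>a<m. ?P x a) (\<Sum>b<m. ?P y b))"
    by (simp only: sum_eigenproj)
  also have "\<dots> = (\<Sum>a<m. \<Sum>b<m. ?T (br (?P x a) (?P y b)))"
    by (simp only: bracket_sum_sum linear_sum[OF linear_spectral_map])
  also have "\<dots> = (\<Sum>a<m. \<Sum>b<m. br (?T (?P x a)) (?P y b) + br (?P x a) (?T (?P y b)))"
    by (intro sum.cong refl spectral_map_bracket_eigenvectors[OF add eigenproj_eigenvector
          eigenproj_eigenvector root_pow_period root_pow_period])
  also have "\<dots> = br (\<Sum>a<m. ?T (?P x a)) (\<Sum>b<m. ?P y b)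
      + br (\<Sum>a<m. ?P x a) (\<Sum>b<m. ?T (?P y b))"
    by (simp only: sum.distrib bracket_sum_sum)
  also have "\<dots> = br (?T x) y + br x (?T y)"
    by (simp only: sum_eigenproj flip: linear_sum[OF linear_spectral_map])
  finally show "?T (br x y) = br (?T x) y + br x (?T y)" .
qed

lemma exists_derivation_of_order_6:
  fixes x :: 'a
  assumes "x \<noteq> 0"
  shows "\<exists>D'. lie_derivation smul br D' \<and> periodic_of_order D' 6"
proof -
  obtain j0 where j0: "eigenproj j0 x \<noteq> 0"
    using sum_eigenproj[of x] assms by (metis sum.neutral)
  define \<omega> :: complex where "\<omega> = exp (2 * of_real pi * \<i> / 6)"
  define c where "c = \<omega> / sixth_phase (root ^ j0)"
  define g where "g l = c * sixth_phase l" for l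
  have \<omega>_pow_eq_1: "\<omega> ^ k = 1 \<longleftrightarrow> 6 dvd k" for k
    using primitive_root_unity_pow_eq_1[of 6 k] by (simp add: \<omega>_def)
  have g_root: "g (root ^ j0) = \<omega>"
    using root_nonzero by (simp add: g_def c_def sixth_phase_nonzero)
  have "c ^ 6 = 1"
    using root_nonzero \<omega>_pow_eq_1[of 6] by (simp add: c_def power_divide sixth_phase_pow_6)
  then have g_pow_6: "g l ^ 6 = 1" if "l ^ m = 1" for l
    using that period_pos
    by (cases "l = 0") (simp_all add: g_def power_0_left power_mult_distrib sixth_phase_pow_6)
  have "norm l = 1" if "l ^ m = 1" for l :: complex
    using power_eq_1_iff[OF that] period_pos by auto
  then have "lie_derivation smul br (spectral_map g)"
    by (intro spectral_map_derivation) (simp add: g_def sixth_phase_add distrib_left)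
  moreover have "spectral_map g ^^ 6 = id"
    by (rule funpow_spectral_map_eq_id) (rule g_pow_6)
  moreover have "spectral_map g ^^ k \<noteq> id" if "1 \<le> k" and "k < 6" for k
  proof
    assume "spectral_map g ^^ k = id"
    then have "smul (\<omega> ^ k - 1) (eigenproj j0 x) = 0"
      using funpow_spectral_map_eigenvector[OF eigenproj_eigenvector[of j0 x], where g = g and n = k]
      by (simp add: g_root scale_left_diff_distrib)
    with j0 \<omega>_pow_eq_1[of k] that show False
      by (auto dest: dvd_imp_le)
  qed
  ultimately show ?thesis
    unfolding periodic_of_order_def by auto
qed

end

lemma periodic_derivationI:
  assumes "lie_algebra smul br" and "lie_derivation smul br D" and "1 \<le> m" and "D ^^ m = id"
  shows "periodic_derivation smul D m br"
  using assms
  by (simp add: periodic_derivation_def periodic_derivation_axioms_def periodic_endomorphism_def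
      periodic_endomorphism_axioms_def lie_algebra_def lie_derivation_def)

theorem corollary3p11:
  fixes smul :: "complex \<Rightarrow> 'a::ab_group_add \<Rightarrow> 'a"
    and br :: "'a \<Rightarrow> 'a \<Rightarrow> 'a"
  assumes "lie_algebra smul br"
    and "finite_dim smul"
    and "\<exists>x::'a. x \<noteq> 0"
  shows "(\<exists>D. lie_derivation smul br D \<and> periodic D) \<longleftrightarrow>
         (\<exists>D. lie_derivation smul br D \<and> periodic_of_order D 6)"
proof
  assume "\<exists>D. lie_derivation smul br D \<and> periodic D"
  then obtain D m where "lie_derivation smul br D" and "1 \<le> m" and "D ^^ m = id"
    unfolding periodic_def by auto
  with assms(1) interpret periodic_derivation smul D m br
    by (rule periodic_derivationI)
  show "\<exists>D. lie_derivation smul br D \<and> periodic_of_order D 6"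
    using assms(3) exists_derivation_of_order_6 by blast
next
  assume "\<exists>D. lie_derivation smul br D \<and> periodic_of_order D 6"
  then show "\<exists>D. lie_derivation smul br D \<and> periodic D"
    unfolding periodic_def periodic_of_order_def by blast
qed

end
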